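(* Let $f:T^2\to\mathbb R^4$ be a Hamiltonian stationary torus with $df=e^{j\beta/2}dz\,g$. A Darboux transform $\hat f:T^2\to\mathfrak C^2=\mathbb H$ of $f$ is Lagrangian in $\mathfrak C^2$ if and only if $\hat f=f+e^{j\beta/2}(\tau_0+j\tau_1)g$ with $\mathrm{Im}(\bar\tau_0\tau_1)=0$, where $\tau_0,\tau_1:T^2\to\mathbb C$.
   Context: Identify $\mathbb R^4$ with $\mathbb H$, $\mathbb C=\mathrm{span}_{\mathbb R}\{1,i\}$, $\mathfrak C=\mathrm{span}_{\mathbb R}\{1,j\}$, so $\mathbb H=\mathfrak C\oplus\mathfrak C i\cong\mathfrak C^2$ with complex structure left multiplication by $j$; "Lagrangian in $\mathfrak C^2$" refers to the corresponding symplectic structure, and a conformal immersion is Lagrangian iff its left normal ($*dF=N_F\,dF$) takes values in the circle $\{e^{j\theta}i\}$. $\langle\cdot,\cdot\rangle$ is the Euclidean inner product on $\mathbb C\cong\mathbb R^2$. $\Gamma\subset\mathbb C$ a lattice, $T^2=\mathbb C/\Gamma$, $\Gamma^*$ its dual lattice. A Hamiltonian stationary torus is a $\Gamma$-periodic conformal immersion $f:\mathbb C\to\mathbb H$ with $df=e^{j\beta/2}dz\,g$, $dz=dx+i\,dy$, $g$ nowhere zero, $\beta(z)=2\pi\langle\beta_0,z\rangle$, $0\ne\beta_0\in\Gamma^*$; convention $*dz=i\,dz$; left normal $N=e^{j\beta}i$. Holomorphic: $*d\alpha=N\,d\alpha$. Darboux transform given by a nowhere vanishing holomorphic $\alpha$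 with multiplier ($\alpha(z+\gamma)=\alpha(z)h(\gamma)$, $h:\Gamma\to\mathbb C_*$): define $\hat T$ by $d\alpha=-df\,\hat T\alpha$; where $\hat T\ne0$ the Darboux transform is $\hat f=f+\hat T^{-1}$. *)

theory Defs
  imports "HOL-Analysis.Analysis"
begin

text \<open>A quaternion a + b j (a, b in C = span{1,i}) is the pair (a, b).
 Since j c = cnj c j for c in C, the product is
 (a + b j)(c + d j) = (a c - b cnj d) + (a d + b cnj c) j.
 The norm / inner product of the product type is the Euclidean one of R^4.\<close>

type_synonym quat = "complex \<times> complex"

definition qmul :: "quat \<Rightarrow> quat \<Rightarrow> quat" where
  "qmul p q = (fst p * fst q - snd p * cnj (snd q), fst p * snd q + snd p * cnj (fst q))"

definition qinv :: "quat \<Rightarrow> quat" where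
  "qinv q = (1 / (norm q)\<^sup>2) *\<^sub>R (cnj (fst q), - snd q)"

definition cq :: "complex \<Rightarrow> quat" where
  "cq c = (c, 0)"

definition qi :: quat where "qi = (\<i>, 0)"
definition qj :: quat where "qj = (0, 1)"

definition qexpj :: "real \<Rightarrow> quat" where
  "qexpj t = (complex_of_real (cos t), complex_of_real (sin t))"

definition lattice :: "complex set \<Rightarrow> bool" where
  "lattice \<Gamma> \<longleftrightarrow> (\<exists>w1 w2. Im (cnj w1 * w2) \<noteq> 0 \<and>
      \<Gamma> = {of_int m * w1 + of_int n * w2 | m n. True})"

definition dual_lattice :: "complex set \<Rightarrow> complex set" where
  "dual_lattice \<Gamma> = {v. \<forall>\<gamma>\<in>\<Gamma>. v \<bullet> \<gamma> \<in> \<int>}"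

definition periodic :: "complex set \<Rightarrow> (complex \<Rightarrow> 'b) \<Rightarrow> bool" where
  "periodic \<Gamma> F \<longleftrightarrow> (\<forall>\<gamma>\<in>\<Gamma>. \<forall>z. F (z + \<gamma>) = F z)"

coinductive smooth :: "('a::real_normed_vector \<Rightarrow> 'b::real_normed_vector) \<Rightarrow> bool" where
  "(\<And>x. (F has_derivative D x) (at x)) \<Longrightarrow> (\<And>v. smooth (\<lambda>x. D x v)) \<Longrightarrow> smooth F"

definition immersion :: "(complex \<Rightarrow> quat) \<Rightarrow> bool" where
  "immersion F \<longleftrightarrow> (\<forall>z. \<exists>D. (F has_derivative D) (at z) \<and> inj D)"

definition beta :: "complex \<Rightarrow> complex \<Rightarrow> real" where
  "beta \<beta>0 z = 2 * pi * (\<beta>0 \<bullet> z)"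

definition HS_torus :: "complex set \<Rightarrow> complex \<Rightarrow> (complex \<Rightarrow> quat) \<Rightarrow> (complex \<Rightarrow> quat) \<Rightarrow> bool" where
  "HS_torus \<Gamma> \<beta>0 f g \<longleftrightarrow>
     lattice \<Gamma> \<and> \<beta>0 \<in> dual_lattice \<Gamma> \<and> \<beta>0 \<noteq> 0 \<and>
     smooth f \<and> periodic \<Gamma> f \<and> (\<forall>z. g z \<noteq> 0) \<and>
     (\<forall>z. (f has_derivative (\<lambda>v. qmul (qmul (qexpj (beta \<beta>0 z / 2)) (cq v)) (g z))) (at z))"

text \<open>*d alpha = N d alpha, with (*omega)(v) = omega(i v) (so *dz = i dz)\<close>
definition holomorphic_wrt :: "(complex \<Rightarrow> quat) \<Rightarrow> (complex \<Rightarrow> quat) \<Rightarrow> bool" where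
  "holomorphic_wrt N \<alpha> \<longleftrightarrow> (\<forall>z. \<exists>D. (\<alpha> has_derivative D) (at z) \<and>
      (\<forall>v. D (\<i> * v) = qmul (N z) (D v)))"

definition has_multiplier :: "complex set \<Rightarrow> (complex \<Rightarrow> quat) \<Rightarrow> bool" where
  "has_multiplier \<Gamma> \<alpha> \<longleftrightarrow> (\<exists>h :: complex \<Rightarrow> complex. (\<forall>\<gamma>\<in>\<Gamma>. h \<gamma> \<noteq> 0) \<and>
      (\<forall>\<gamma>\<in>\<Gamma>. \<forall>z. \<alpha> (z + \<gamma>) = qmul (\<alpha> z) (cq (h \<gamma>))))"

section \<open>Lagrangian in C^2 (complex structure: left multiplication by j)\<close>

definition omega :: "quat \<Rightarrow> quat \<Rightarrow> real" where
  "omega x y = inner (qmul qj x) y"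

definition lagrangian :: "(complex \<Rightarrow> quat) \<Rightarrow> bool" where
  "lagrangian F \<longleftrightarrow> immersion F \<and>
     (\<forall>z D. (F has_derivative D) (at z) \<longrightarrow> (\<forall>v w. omega (D v) (D w) = 0))"

end

theory Submission
  imports Defs
begin

text \<open>Write T^-1 = e^(j\<beta>/2) \<tau> g, so that the Darboux transform is f + e^(j\<beta>/2) \<tau> g and
 \<tau> = \<tau>0 + j \<tau>1 is determined by it. Differentiating d\<alpha> = -df T \<alpha> once more, the symmetry of the
 second derivatives of \<alpha> and of f gives df \<and> \<omega> = 0 for \<omega> = dT - T df T. As the derivative of the
 transform is -T^-1 \<omega> T^-1, this says that its left normal is P i P^-1 with
 P = T^-1 g^-1 = e^(j\<beta>/2) \<tau>. An immersion is Lagrangian iff its left normal N satisfies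
 \<langle>j, N\<rangle> = 0; conjugation by e^(j\<beta>/2) commutes with j, and
 \<langle>j, \<tau> i \<tau>^-1\<rangle> = -2 Im (cnj \<tau>0 * \<tau>1) / |\<tau>|^2. Finally \<tau> is periodic: T is, because \<alpha> has a
 multiplier, while e^(j\<beta>/2) and g change by the same sign under lattice translations.\<close>

definition qconj :: "quat \<Rightarrow> quat" where
  "qconj q = (cnj (fst q), - snd q)"

lemma qmul_assoc: "qmul (qmul p q) r = qmul p (qmul q r)"
  by (simp add: qmul_def prod_eq_iff algebra_simps)

lemma qmul_one_right [simp]: "qmul q (1, 0) = q"
  and qmul_one_left [simp]: "qmul (1, 0) q = q"
  by (simp_all add: qmul_def)

lemma qmul_zero_right [simp]: "qmul q 0 = 0"
  by (simp add: qmul_def zero_prod_def)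

lemma qmul_add_left: "qmul (p + q) r = qmul p r + qmul q r"
  and qmul_add_right: "qmul r (p + q) = qmul r p + qmul r q"
  and qmul_scaleR_left: "qmul (c *\<^sub>R p) r = c *\<^sub>R qmul p r"
  and qmul_scaleR_right: "qmul r (c *\<^sub>R p) = c *\<^sub>R qmul r p"
  and qmul_minus_left: "qmul (- p) r = - qmul p r"
  and qmul_minus_right: "qmul r (- p) = - qmul r p"
  and qmul_diff_left: "qmul (p - q) r = qmul p r - qmul q r"
  and qmul_diff_right: "qmul r (p - q) = qmul r p - qmul r q"
  by (simp_all add: qmul_def algebra_simps scaleR_conv_of_real)

lemmas qmul_ring_simps = qmul_assoc qmul_add_left qmul_add_right qmul_diff_left qmul_diff_right
  qmul_minus_left qmul_minus_right qmul_scaleR_left qmul_scaleR_right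

lemma norm_qmul: "norm (qmul p q) = norm p * norm q"
proof -
  obtain a b c d where pq: "p = (a, b)" "q = (c, d)" by (cases p, cases q)
  have "(norm (qmul p q))\<^sup>2 = (norm p * norm q)\<^sup>2"
    unfolding pq qmul_def
    by (simp add: norm_Pair power_mult_distrib cmod_power2) (simp add: algebra_simps power2_eq_square)
  then show ?thesis by (simp add: power2_eq_iff_nonneg)
qed

lemma bounded_bilinear_qmul: "bounded_bilinear qmul"
proof
  show "\<exists>K. \<forall>a b. norm (qmul a b) \<le> norm a * norm b * K"
    by (rule exI[of _ 1]) (simp add: norm_qmul)
qed (simp_all add: qmul_add_left qmul_add_right qmul_scaleR_left qmul_scaleR_right)

lemma qmul_nonzero: "p \<noteq> 0 \<Longrightarrow> q \<noteq> 0 \<Longrightarrow> qmul p q \<noteq> 0"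
  by (metis norm_qmul norm_eq_zero mult_eq_0_iff)

lemma qmul_qconj_self: "qmul q (qconj q) = (complex_of_real ((norm q)\<^sup>2), 0)"
  and qconj_qmul_self: "qmul (qconj q) q = (complex_of_real ((norm q)\<^sup>2), 0)"
  by (cases q; simp add: qmul_def qconj_def norm_Pair complex_mult_cnj cmod_power2 algebra_simps)+

lemma qconj_scaleR: "qconj (r *\<^sub>R q) = r *\<^sub>R qconj q"
  by (simp add: qconj_def scaleR_conv_of_real)

lemma qinv_eq_scaleR_qconj: "qinv q = (1 / (norm q)\<^sup>2) *\<^sub>R qconj q"
  by (simp add: qinv_def qconj_def)

lemma qmul_qinv_right: "q \<noteq> 0 \<Longrightarrow> qmul q (qinv q) = (1, 0)"
  and qmul_qinv_left: "q \<noteq> 0 \<Longrightarrow> qmul (qinv q) q = (1, 0)"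
  by (simp_all add: qinv_eq_scaleR_qconj qmul_scaleR_right qmul_scaleR_left qmul_qconj_self
      qconj_qmul_self scaleR_conv_of_real prod_eq_iff)

lemma qmul_qinv_cancel_left: "q \<noteq> 0 \<Longrightarrow> qmul q (qmul (qinv q) r) = r"
  and qinv_qmul_cancel_left: "q \<noteq> 0 \<Longrightarrow> qmul (qinv q) (qmul q r) = r"
  by (simp_all add: qmul_assoc[symmetric] qmul_qinv_right qmul_qinv_left)

lemmas qmul_qinv_simps = qmul_qinv_right qmul_qinv_left qmul_qinv_cancel_left qinv_qmul_cancel_left

lemma qinv_nonzero: "q \<noteq> 0 \<Longrightarrow> qinv q \<noteq> 0"
  by (metis qmul_qinv_right qmul_zero_right zero_neq_one prod.inject zero_prod_def)

lemma qmul_left_cancel: "p \<noteq> 0 \<Longrightarrow> qmul p x = qmul p y \<Longrightarrow> x = y"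
  by (metis qinv_qmul_cancel_left)

lemma qmul_right_cancel: "p \<noteq> 0 \<Longrightarrow> qmul x p = qmul y p \<Longrightarrow> x = y"
  by (metis qmul_qinv_right qmul_assoc qmul_one_right)

lemma qinv_unique: "qmul p q = (1, 0) \<Longrightarrow> p \<noteq> 0 \<Longrightarrow> q = qinv p"
  by (metis qmul_qinv_left qmul_assoc qmul_one_left qmul_one_right)

lemma qinv_qmul_distrib: "p \<noteq> 0 \<Longrightarrow> q \<noteq> 0 \<Longrightarrow> qinv (qmul p q) = qmul (qinv q) (qinv p)"
  by (metis qinv_unique qmul_nonzero qmul_qinv_right qmul_assoc qmul_one_left)

lemma qinv_qinv: "q \<noteq> 0 \<Longrightarrow> qinv (qinv q) = q"
  by (metis qinv_unique qmul_qinv_left qinv_nonzero)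

lemma qinv_scaleR:
  assumes "r \<noteq> 0"
  shows "qinv (r *\<^sub>R q) = (1 / r) *\<^sub>R qinv q"
proof -
  have "qinv (r *\<^sub>R q) = (1 / (r\<^sup>2 * (norm q)\<^sup>2) * r) *\<^sub>R qconj q"
    by (simp add: qinv_eq_scaleR_qconj qconj_scaleR power_mult_distrib)
  also have "1 / (r\<^sup>2 * (norm q)\<^sup>2) * r = 1 / r * (1 / (norm q)\<^sup>2)"
    using assms by (simp add: field_simps power2_eq_square)
  finally show ?thesis by (simp add: qinv_eq_scaleR_qconj)
qed

lemma cq_add_qj_cq: "cq a + qmul qj (cq b) = (a, cnj b)"
  by (simp add: cq_def qj_def qmul_def)

lemma norm_qexpj [simp]: "norm (qexpj t) = 1"
  by (simp add: qexpj_def norm_Pair)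

lemma qexpj_nonzero: "qexpj t \<noteq> 0"
  using norm_qexpj[of t] by (metis norm_zero zero_neq_one)

lemma qexpj_add_int_pi:
  assumes "k \<in> \<int>"
  shows "qexpj (t + pi * k) = cos (pi * k) *\<^sub>R qexpj t" and "(cos (pi * k))\<^sup>2 = 1"
proof -
  have sin: "sin (pi * k) = 0" using sin_times_pi_eq_0[of k] assms by (simp add: mult.commute)
  then show "(cos (pi * k))\<^sup>2 = 1" using sin_cos_squared_add[of "pi * k"] by simp
  show "qexpj (t + pi * k) = cos (pi * k) *\<^sub>R qexpj t"
    using sin by (simp add: qexpj_def cos_add sin_add scaleR_conv_of_real prod_eq_iff)
qed

lemma bounded_linear_qconj: "bounded_linear qconj"
  by (rule bounded_linear_intro[where K = 1]) (auto simp: qconj_def norm_Pair)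

lemma qconj_sandwich:
  "qmul (qmul (qconj x) h) (qconj x) = (2 * inner x h) *\<^sub>R qconj x - (inner x x) *\<^sub>R qconj h"
proof -
  obtain a b c d where xh: "x = (a, b)" "h = (c, d)" by (cases x, cases h)
  show ?thesis unfolding xh
    by (simp add: qmul_def qconj_def prod_eq_iff complex_eq_iff inner_complex_def algebra_simps
        power2_eq_square)
qed

lemma has_derivative_qinv:
  assumes "x \<noteq> 0"
  shows "(qinv has_derivative (\<lambda>h. - qmul (qmul (qinv x) h) (qinv x))) (at x)"
proof -
  have qinv_eq: "qinv = (\<lambda>q. inverse (inner q q) *\<^sub>R qconj q)"
    by (auto simp: qinv_eq_scaleR_qconj power2_norm_eq_inner divide_inverse_commute)
  define c where "c = inverse (inner x x)"
  have "inner x x \<noteq> 0" using assms by simp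
  then have "((\<lambda>q. inverse (inner q q) *\<^sub>R qconj q) has_derivative
      (\<lambda>h. c *\<^sub>R qconj h - (c * (inner h x + inner x h) * c) *\<^sub>R qconj x)) (at x)"
    unfolding c_def
    by (auto intro!: derivative_eq_intros bounded_linear.has_derivative[OF bounded_linear_qconj])
  moreover have "- qmul (qmul (qinv x) h) (qinv x)
      = c *\<^sub>R qconj h - (c * (inner h x + inner x h) * c) *\<^sub>R qconj x" for h
  proof -
    have "- qmul (qmul (qinv x) h) (qinv x) = - (c * c) *\<^sub>R qmul (qmul (qconj x) h) (qconj x)"
      by (simp add: qinv_eq c_def qmul_scaleR_left qmul_scaleR_right)
    also have "\<dots> = c *\<^sub>R qconj h - (c * (inner h x + inner x h) * c) *\<^sub>R qconj x"
      using \<open>inner x x \<noteq> 0\<close> by (simp add: c_def qconj_sandwich algebra_simps inner_commute)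
    finally show ?thesis .
  qed
  ultimately show ?thesis by (simp add: qinv_eq)
qed

lemma has_derivative_qinv_comp:
  assumes "(F has_derivative F') (at z)" "F z \<noteq> 0"
  shows "((\<lambda>z. qinv (F z)) has_derivative (\<lambda>h. - qmul (qmul (qinv (F z)) (F' h)) (qinv (F z)))) (at z)"
  using has_derivative_compose[OF assms(1) has_derivative_qinv[OF assms(2)]] by simp

lemma has_derivative_qmul:
  assumes "(F has_derivative F') (at z)" "(G has_derivative G') (at z)"
  shows "((\<lambda>z. qmul (F z) (G z)) has_derivative (\<lambda>h. qmul (F z) (G' h) + qmul (F' h) (G z))) (at z)"
  using bounded_bilinear.FDERIV[OF bounded_bilinear_qmul assms] .

lemma has_derivative_shift:
  assumes "(F has_derivative D) (at (z + \<gamma>))"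
  shows "((\<lambda>x. F (x + \<gamma>)) has_derivative D) (at z)"
proof -
  have "((\<lambda>x. x + \<gamma>) has_derivative (\<lambda>h. h)) (at z)" by (auto intro!: derivative_eq_intros)
  from has_derivative_compose[OF this assms] show ?thesis by simp
qed

lemma has_derivative_periodic:
  assumes "periodic \<Gamma> F" "\<gamma> \<in> \<Gamma>" "\<And>x. (F has_derivative D x) (at x)"
  shows "D (z + \<gamma>) = D z"
proof -
  have "(\<lambda>x. F (x + \<gamma>)) = F" using assms(1,2) by (auto simp: periodic_def)
  then have "(F has_derivative D (z + \<gamma>)) (at z)" using has_derivative_shift[OF assms(3)] by metis
  then show ?thesis using assms(3) has_derivative_unique by blast
qed

lemma smooth_imp_has_derivative: "smooth F \<Longrightarrow> \<exists>D. \<forall>x. (F has_derivative D x) (at x)"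
  using smooth.simps[of F] by blast

lemma smooth_has_second_derivative:
  assumes "smooth F" "\<And>x. (F has_derivative D x) (at x)"
  shows "\<exists>E. \<forall>v x. ((\<lambda>x. D x v) has_derivative E v x) (at x)"
proof -
  from assms(1) obtain D' where D': "\<And>x. (F has_derivative D' x) (at x)"
    and smooth_D': "\<And>v. smooth (\<lambda>x. D' x v)"
    using smooth.simps[of F] by blast
  have "D' = D" using D' assms(2) has_derivative_unique by blast
  then have "\<forall>v. \<exists>E. \<forall>x. ((\<lambda>x. D x v) has_derivative E x) (at x)"
    using smooth_D' smooth_imp_has_derivative by blast
  then show ?thesis by metis
qed

subsection \<open>Symmetry of second derivatives\<close>

lemma second_difference_mean_value:
  fixes F :: "'a::real_normed_vector \<Rightarrow> 'b::real_inner"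
  assumes D: "\<And>x. (F has_derivative D x) (at x)" and "0 < t"
  shows "\<exists>s\<in>{0<..<t}. norm (F (x0 + t *\<^sub>R v + t *\<^sub>R w) - F (x0 + t *\<^sub>R v) - F (x0 + t *\<^sub>R w) + F x0
      - (t * t) *\<^sub>R c) \<le> t * norm (D (x0 + s *\<^sub>R v + t *\<^sub>R w) v - D (x0 + s *\<^sub>R v) v - t *\<^sub>R c)"
proof -
  define \<phi> where "\<phi> s = F (x0 + s *\<^sub>R v + t *\<^sub>R w) - F (x0 + s *\<^sub>R v) - s *\<^sub>R (t *\<^sub>R c)" for s
  define \<phi>' where "\<phi>' s h = D (x0 + s *\<^sub>R v + t *\<^sub>R w) (h *\<^sub>R v) - D (x0 + s *\<^sub>R v) (h *\<^sub>R v)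
      - h *\<^sub>R (t *\<^sub>R c)" for s h
  have der: "(\<phi> has_derivative \<phi>' s) (at s)" for s
  proof -
    have "((\<lambda>s. x0 + s *\<^sub>R v + t *\<^sub>R w) has_derivative (\<lambda>h. h *\<^sub>R v)) (at s)"
      and "((\<lambda>s. x0 + s *\<^sub>R v) has_derivative (\<lambda>h. h *\<^sub>R v)) (at s)"
      and "((\<lambda>s. s *\<^sub>R (t *\<^sub>R c)) has_derivative (\<lambda>h. h *\<^sub>R (t *\<^sub>R c))) (at s)"
      by (auto intro!: derivative_eq_intros)
    then show ?thesis
      unfolding \<phi>_def[abs_def] \<phi>'_def by (intro has_derivative_diff has_derivative_compose[OF _ D])
  qed
  then have "continuous_on {0..t} \<phi>"
    by (meson has_derivative_continuous continuous_at_imp_continuous_on)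
  with mvt_general[of 0 t \<phi> \<phi>'] der \<open>0 < t\<close> obtain s where s: "s \<in> {0<..<t}"
    and mv: "norm (\<phi> t - \<phi> 0) \<le> norm (\<phi>' s (t - 0))" by auto
  have "linear (D x)" for x using D has_derivative_linear by blast
  then have "\<phi>' s t = t *\<^sub>R (D (x0 + s *\<^sub>R v + t *\<^sub>R w) v - D (x0 + s *\<^sub>R v) v - t *\<^sub>R c)"
    by (simp add: \<phi>'_def linear_scale scaleR_diff_right)
  then have \<phi>'_norm: "norm (\<phi>' s (t - 0))
      = t * norm (D (x0 + s *\<^sub>R v + t *\<^sub>R w) v - D (x0 + s *\<^sub>R v) v - t *\<^sub>R c)"
    using \<open>0 < t\<close> by simp
  have \<phi>_diff: "\<phi> t - \<phi> 0 = F (x0 + t *\<^sub>R v + t *\<^sub>R w) - F (x0 + t *\<^sub>R v) - F (x0 + t *\<^sub>R w) + F x0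
      - (t * t) *\<^sub>R c"
    by (simp add: \<phi>_def algebra_simps)
  show ?thesis using mv s unfolding \<phi>_diff \<phi>'_norm by blast
qed

lemma linear_approx_increment:
  assumes "linear L"
    and approx: "\<And>y. norm (y - x0) < d \<Longrightarrow> norm (G y - G x0 - L (y - x0)) \<le> e * norm (y - x0)"
    and "norm (p - x0) < d" "norm (q - x0) < d"
  shows "norm (G p - G q - L (p - q)) \<le> e * norm (p - x0) + e * norm (q - x0)"
proof -
  have "L (p - q) = L (p - x0) - L (q - x0)"
    by (metis \<open>linear L\<close> linear_diff diff_diff_cancel diff_diff_eq2 diff_add_cancel)
  then have "G p - G q - L (p - q) = (G p - G x0 - L (p - x0)) - (G q - G x0 - L (q - x0))"
    by (simp add: algebra_simps)
  then have "norm (G p - G q - L (p - q))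
      \<le> norm (G p - G x0 - L (p - x0)) + norm (G q - G x0 - L (q - x0))"
    by (metis norm_triangle_ineq4)
  then show ?thesis using approx assms(3,4) by (smt (verit))
qed

lemma second_difference_estimate:
  fixes F :: "'a::real_normed_vector \<Rightarrow> 'b::real_inner"
  assumes D: "\<And>x. (F has_derivative D x) (at x)"
    and E: "((\<lambda>x. D x v) has_derivative Ev) (at x0)"
    and "e > 0"
  shows "\<exists>d>0. \<forall>t. 0 < t \<and> t < d \<longrightarrow>
     norm (F (x0 + t *\<^sub>R v + t *\<^sub>R w) - F (x0 + t *\<^sub>R v) - F (x0 + t *\<^sub>R w) + F x0 - (t * t) *\<^sub>R Ev w)
       \<le> e * (t * t) * (2 * norm v + norm w)"
proof -
  have "linear Ev" using E has_derivative_linear by blast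
  from E \<open>e > 0\<close> obtain d0 where "d0 > 0"
    and d0: "\<And>y. norm (y - x0) < d0 \<Longrightarrow> norm (D y v - D x0 v - Ev (y - x0)) \<le> e * norm (y - x0)"
    unfolding has_derivative_at_alt by blast
  define d where "d = d0 / (norm v + norm w + 1)"
  have "norm v + norm w + 1 > 0" by (simp add: add_nonneg_pos)
  then have "d > 0" using \<open>d0 > 0\<close> by (simp add: d_def)
  show ?thesis
  proof (intro exI[of _ d] conjI allI impI \<open>d > 0\<close>)
    fix t :: real assume t: "0 < t \<and> t < d"
    have "t * (norm v + norm w) \<le> t * (norm v + norm w + 1)" using t by simp
    also have "\<dots> < d * (norm v + norm w + 1)"
      using t \<open>norm v + norm w + 1 > 0\<close> by (intro mult_strict_right_mono) auto
    also have "\<dots> = d0" using \<open>norm v + norm w + 1 > 0\<close> by (simp add: d_def)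
    finally have small: "t * (norm v + norm w) < d0" .
    obtain s where s: "s \<in> {0<..<t}" and mv: "norm (F (x0 + t *\<^sub>R v + t *\<^sub>R w) - F (x0 + t *\<^sub>R v)
        - F (x0 + t *\<^sub>R w) + F x0 - (t * t) *\<^sub>R Ev w)
        \<le> t * norm (D (x0 + s *\<^sub>R v + t *\<^sub>R w) v - D (x0 + s *\<^sub>R v) v - t *\<^sub>R Ev w)"
      using second_difference_mean_value[OF D] t by blast
    define p1 where "p1 = x0 + s *\<^sub>R v + t *\<^sub>R w"
    define p2 where "p2 = x0 + s *\<^sub>R v"
    have n1: "norm (p1 - x0) \<le> t * (norm v + norm w)"
    proof -
      have "norm (p1 - x0) \<le> norm (s *\<^sub>R v) + norm (t *\<^sub>R w)"
        unfolding p1_def by (metis add_diff_cancel_left' norm_triangle_ineq add.assoc)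
      also have "\<dots> \<le> t * norm v + t * norm w"
        using s t by (intro add_mono) (auto intro!: mult_right_mono)
      finally show ?thesis by (simp add: algebra_simps)
    qed
    have n2: "norm (p2 - x0) \<le> t * norm v"
      using s by (auto simp: p2_def intro!: mult_right_mono)
    have "t * norm v \<le> t * (norm v + norm w)" using t by (simp add: distrib_left)
    then have "norm (D p1 v - D p2 v - Ev (p1 - p2)) \<le> e * norm (p1 - x0) + e * norm (p2 - x0)"
      using n1 n2 small by (intro linear_approx_increment[where d = d0, OF \<open>linear Ev\<close> d0]) linarith+
    moreover have "Ev (p1 - p2) = t *\<^sub>R Ev w"
      by (simp add: p1_def p2_def linear_scale[OF \<open>linear Ev\<close>])
    ultimately have "norm (D p1 v - D p2 v - t *\<^sub>R Ev w) \<le> e * norm (p1 - x0) + e * norm (p2 - x0)"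
      by simp
    also have "\<dots> \<le> e * (t * (norm v + norm w)) + e * (t * norm v)"
      using n1 n2 \<open>e > 0\<close> by (intro add_mono mult_left_mono) auto
    also have "\<dots> = e * t * (2 * norm v + norm w)" by (simp add: algebra_simps)
    finally have "t * norm (D p1 v - D p2 v - t *\<^sub>R Ev w) \<le> t * (e * t * (2 * norm v + norm w))"
      using t by (intro mult_left_mono) auto
    then show "norm (F (x0 + t *\<^sub>R v + t *\<^sub>R w) - F (x0 + t *\<^sub>R v) - F (x0 + t *\<^sub>R w) + F x0
        - (t * t) *\<^sub>R Ev w) \<le> e * (t * t) * (2 * norm v + norm w)"
      using mv unfolding p1_def p2_def by (simp add: algebra_simps)
  qed
qed

lemma nonpos_if_le_epsilon_mult:
  fixes x K :: real
  assumes "\<And>e. e > 0 \<Longrightarrow> x \<le> e * K" "K \<ge> 0"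
  shows "x \<le> 0"
proof (rule field_le_epsilon)
  fix e :: real assume "e > 0"
  have "K + 1 > 0" using \<open>K \<ge> 0\<close> by simp
  then have "x \<le> e / (K + 1) * K" using assms(1)[of "e / (K + 1)"] \<open>e > 0\<close> by simp
  also have "\<dots> \<le> 0 + e" using \<open>e > 0\<close> \<open>K + 1 > 0\<close> by (simp add: field_simps)
  finally show "x \<le> 0 + e" .
qed

lemma has_derivative_second_symmetric:
  fixes F :: "'a::real_normed_vector \<Rightarrow> 'b::real_inner"
  assumes D: "\<And>x. (F has_derivative D x) (at x)"
    and Ev: "((\<lambda>x. D x v) has_derivative Ev) (at x0)"
    and Ew: "((\<lambda>x. D x w) has_derivative Ew) (at x0)"
  shows "Ev w = Ew v"
proof -
  have "norm (Ev w - Ew v) \<le> 0"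
  proof (rule nonpos_if_le_epsilon_mult[where K = "3 * (norm v + norm w)"])
    fix e :: real assume "e > 0"
    from second_difference_estimate[OF D Ev this, of w] obtain d1 where "d1 > 0" and
      b1: "\<And>t. 0 < t \<and> t < d1 \<Longrightarrow> norm (F (x0 + t *\<^sub>R v + t *\<^sub>R w) - F (x0 + t *\<^sub>R v)
        - F (x0 + t *\<^sub>R w) + F x0 - (t * t) *\<^sub>R Ev w) \<le> e * (t * t) * (2 * norm v + norm w)"
      by blast
    from second_difference_estimate[OF D Ew \<open>e > 0\<close>, of v] obtain d2 where "d2 > 0" and
      b2: "\<And>t. 0 < t \<and> t < d2 \<Longrightarrow> norm (F (x0 + t *\<^sub>R w + t *\<^sub>R v) - F (x0 + t *\<^sub>R w)
        - F (x0 + t *\<^sub>R v) + F x0 - (t * t) *\<^sub>R Ew v) \<le> e * (t * t) * (2 * norm w + norm v)"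
      by blast
    define t where "t = min d1 d2 / 2"
    have t: "0 < t" "t < d1" "t < d2" using \<open>d1 > 0\<close> \<open>d2 > 0\<close> by (auto simp: t_def)
    define \<Delta> where "\<Delta> = F (x0 + t *\<^sub>R v + t *\<^sub>R w) - F (x0 + t *\<^sub>R v) - F (x0 + t *\<^sub>R w) + F x0"
    have c1: "norm (\<Delta> - (t * t) *\<^sub>R Ev w) \<le> e * (t * t) * (2 * norm v + norm w)"
      using b1[of t] t by (simp add: \<Delta>_def)
    have c2: "norm (\<Delta> - (t * t) *\<^sub>R Ew v) \<le> e * (t * t) * (2 * norm w + norm v)"
      using b2[of t] t by (simp add: \<Delta>_def algebra_simps)
    have "(t * t) * norm (Ev w - Ew v) = norm ((\<Delta> - (t * t) *\<^sub>R Ew v) - (\<Delta> - (t * t) *\<^sub>R Ev w))"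
      using t by (simp add: scaleR_diff_right[symmetric])
    also have "\<dots> \<le> norm (\<Delta> - (t * t) *\<^sub>R Ew v) + norm (\<Delta> - (t * t) *\<^sub>R Ev w)"
      by (rule norm_triangle_ineq4)
    also have "\<dots> \<le> (t * t) * (e * (3 * (norm v + norm w)))"
      using c1 c2 by (simp add: field_simps)
    finally show "norm (Ev w - Ew v) \<le> e * (3 * (norm v + norm w))"
      using t by (simp add: mult_le_cancel_left_pos)
  qed simp
  then show ?thesis by simp
qed

section \<open>The Lagrangian condition\<close>

lemma omega_self: "omega p p = 0"
  by (cases p) (simp add: omega_def qmul_def qj_def inner_complex_def algebra_simps)

lemma omega_antisym: "omega q p = - omega p q"
  by (cases p, cases q) (simp add: omega_def qmul_def qj_def inner_complex_def algebra_simps)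

lemma omega_scaleR_add:
  "omega (a *\<^sub>R X + b *\<^sub>R Y) (c *\<^sub>R X + d *\<^sub>R Y) = (a * d - b * c) * omega X Y"
proof -
  have "omega (a *\<^sub>R X + b *\<^sub>R Y) (c *\<^sub>R X + d *\<^sub>R Y) =
     a * c * omega X X + a * d * omega X Y + b * c * omega Y X + b * d * omega Y Y"
    by (simp add: omega_def qmul_add_right qmul_scaleR_right inner_add_left inner_add_right
        algebra_simps)
  then show ?thesis by (simp add: omega_self omega_antisym[of Y X] algebra_simps)
qed

lemma omega_qmul_left: "omega X (qmul N X) = inner X X * inner qj N"
  by (cases X, cases N) (simp add: omega_def qmul_def qj_def inner_complex_def algebra_simps)

lemma omega_vanishes_iff:
  assumes "linear L" "L 1 \<noteq> 0" and normal: "L \<i> = qmul N (L 1)"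
  shows "(\<forall>v w. omega (L v) (L w) = 0) \<longleftrightarrow> inner qj N = 0"
proof -
  have omega_basis: "omega (L 1) (L \<i>) = inner (L 1) (L 1) * inner qj N"
    by (simp add: normal omega_qmul_left)
  have L_eq: "L v = Re v *\<^sub>R L 1 + Im v *\<^sub>R L \<i>" for v
  proof -
    have "v = Re v *\<^sub>R 1 + Im v *\<^sub>R \<i>" by (simp add: complex_eq_iff)
    then show ?thesis by (metis \<open>linear L\<close> linear_add linear_scale)
  qed
  show ?thesis
  proof
    assume "\<forall>v w. omega (L v) (L w) = 0"
    then show "inner qj N = 0" using omega_basis \<open>L 1 \<noteq> 0\<close> by simp
  next
    assume "inner qj N = 0"
    show "\<forall>v w. omega (L v) (L w) = 0"
    proof (intro allI)
      fix v w
      show "omega (L v) (L w) = 0"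
        unfolding L_eq[of v] L_eq[of w] omega_scaleR_add omega_basis \<open>inner qj N = 0\<close> by simp
    qed
  qed
qed

lemma lagrangian_iff_left_normal:
  assumes imm: "immersion F" and D: "\<And>z. (F has_derivative D z) (at z)"
    and normal: "\<And>z. D z \<i> = qmul (N z) (D z 1)"
  shows "lagrangian F \<longleftrightarrow> (\<forall>z. inner qj (N z) = 0)"
proof -
  have "D z 1 \<noteq> 0" for z
  proof -
    from imm obtain D' where "(F has_derivative D') (at z)" "inj D'" unfolding immersion_def by blast
    then have "inj (D z)" using D has_derivative_unique by metis
    moreover have "D z 0 = 0" using D has_derivative_linear linear_0 by blast
    ultimately show ?thesis by (metis inj_eq zero_neq_one)
  qed
  then have "(\<forall>v w. omega (D z v) (D z w) = 0) \<longleftrightarrow> inner qj (N z) = 0" for z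
    using omega_vanishes_iff D normal has_derivative_linear by blast
  then show ?thesis
    using imm D has_derivative_unique unfolding lagrangian_def by metis
qed

lemma inner_qj_qexpj_conj: "inner qj (qmul (qmul (qexpj t) Y) (qinv (qexpj t))) = inner qj Y"
proof -
  have cos_sq: "cos t * cos t = 1 - sin t * sin t"
    by (simp add: cos_squared_eq[unfolded power2_eq_square])
  obtain a b where Y: "Y = (a, b)" by (cases Y)
  have "qinv (qexpj t) = qconj (qexpj t)"
    by (simp add: qinv_eq_scaleR_qconj)
  then show ?thesis
    unfolding Y by (simp add: qexpj_def qmul_def qconj_def qj_def inner_complex_def algebra_simps cos_sq)
qed

lemma inner_qj_qi_conj:
  assumes "q \<noteq> 0"
  shows "inner qj (qmul (qmul q qi) (qinv q)) = 0 \<longleftrightarrow> Im (cnj (fst q) * cnj (snd q)) = 0"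
proof -
  have conj_eq: "inner qj (qmul (qmul q qi) (qconj q)) = - 2 * Im (cnj (fst q) * cnj (snd q))"
    by (cases q) (simp add: qmul_def qconj_def qj_def qi_def inner_complex_def algebra_simps)
  have "inner qj (qmul (qmul q qi) (qinv q)) = 1 / (norm q)\<^sup>2 * inner qj (qmul (qmul q qi) (qconj q))"
    by (simp add: qinv_eq_scaleR_qconj qmul_scaleR_right)
  then show ?thesis using assms by (simp only: conj_eq) (simp; arith)
qed

section \<open>Darboux transforms\<close>

lemma darboux_factor_differentiable:
  fixes F \<alpha> T :: "'a::real_normed_vector \<Rightarrow> quat"
  assumes "smooth F" "smooth \<alpha>"
    and F': "\<And>x. (F has_derivative \<Phi> x) (at x)"
    and \<alpha>': "\<And>x. (\<alpha> has_derivative (\<lambda>v. - qmul (qmul (\<Phi> x v) (T x)) (\<alpha> x))) (at x)"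
    and \<alpha>_nz: "\<And>x. \<alpha> x \<noteq> 0" and \<Phi>_nz: "\<And>x. \<Phi> x v0 \<noteq> 0"
  shows "\<exists>T'. \<forall>x. (T has_derivative T' x) (at x)"
proof -
  define D\<alpha> where "D\<alpha> x v = - qmul (qmul (\<Phi> x v) (T x)) (\<alpha> x)" for x v
  obtain \<Psi> where \<Psi>: "\<And>v x. ((\<lambda>x. \<Phi> x v) has_derivative \<Psi> v x) (at x)"
    using smooth_has_second_derivative[OF \<open>smooth F\<close> F'] by blast
  obtain A where A: "\<And>v x. ((\<lambda>x. D\<alpha> x v) has_derivative A v x) (at x)"
    using smooth_has_second_derivative[OF \<open>smooth \<alpha>\<close>, of D\<alpha>] \<alpha>' by (auto simp: D\<alpha>_def[abs_def])
  have "T = (\<lambda>x. - qmul (qmul (qinv (\<Phi> x v0)) (D\<alpha> x v0)) (qinv (\<alpha> x)))"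
    using \<Phi>_nz \<alpha>_nz by (auto simp: D\<alpha>_def qmul_ring_simps qmul_qinv_simps)
  moreover have "\<exists>D. ((\<lambda>x. - qmul (qmul (qinv (\<Phi> x v0)) (D\<alpha> x v0)) (qinv (\<alpha> x))) has_derivative D)
      (at x)" for x
    by (rule exI, rule has_derivative_minus, rule has_derivative_qmul[OF has_derivative_qmul[OF
          has_derivative_qinv_comp[OF \<Psi> \<Phi>_nz] A] has_derivative_qinv_comp[OF \<alpha>' \<alpha>_nz]])
  ultimately show ?thesis by metis
qed

text \<open>This is \<open>dF \<and> (dT - T dF T) = 0\<close>, the content of \<open>d(d\<alpha>) = 0\<close> once \<open>d(dF) = 0\<close> is used.\<close>

lemma darboux_integrability:
  fixes F \<alpha> T :: "'a::real_normed_vector \<Rightarrow> quat"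
  assumes "smooth F" "smooth \<alpha>"
    and F': "\<And>x. (F has_derivative \<Phi> x) (at x)"
    and \<alpha>': "\<And>x. (\<alpha> has_derivative (\<lambda>v. - qmul (qmul (\<Phi> x v) (T x)) (\<alpha> x))) (at x)"
    and T': "\<And>x. (T has_derivative T' x) (at x)"
    and \<alpha>_nz: "\<And>x. \<alpha> x \<noteq> 0"
  shows "qmul (\<Phi> x v) (T' x w - qmul (qmul (T x) (\<Phi> x w)) (T x))
       = qmul (\<Phi> x w) (T' x v - qmul (qmul (T x) (\<Phi> x v)) (T x))"
proof -
  define D\<alpha> where "D\<alpha> x v = - qmul (qmul (\<Phi> x v) (T x)) (\<alpha> x)" for x v
  have D\<alpha>: "(\<alpha> has_derivative D\<alpha> x) (at x)" for x
    using \<alpha>' by (simp add: D\<alpha>_def[abs_def])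
  obtain \<Psi> where \<Psi>: "\<And>v x. ((\<lambda>x. \<Phi> x v) has_derivative \<Psi> v x) (at x)"
    using smooth_has_second_derivative[OF \<open>smooth F\<close> F'] by blast
  obtain A where A: "\<And>v x. ((\<lambda>x. D\<alpha> x v) has_derivative A v x) (at x)"
    using smooth_has_second_derivative[OF \<open>smooth \<alpha>\<close> D\<alpha>] by blast
  have "((\<lambda>x. D\<alpha> x v) has_derivative (\<lambda>h. - (qmul (qmul (\<Phi> x v) (T x)) (D\<alpha> x h)
      + qmul (qmul (\<Phi> x v) (T' x h) + qmul (\<Psi> v x h) (T x)) (\<alpha> x)))) (at x)" for v
    unfolding D\<alpha>_def[abs_def]
    by (intro has_derivative_minus has_derivative_qmul \<Psi> T' \<alpha>')
  then have A_eq: "A v x = (\<lambda>h. - (qmul (qmul (\<Phi> x v) (T x)) (D\<alpha> x h)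
      + qmul (qmul (\<Phi> x v) (T' x h) + qmul (\<Psi> v x h) (T x)) (\<alpha> x)))" for v
    using A has_derivative_unique by blast
  have "A v x w = A w x v" by (rule has_derivative_second_symmetric[OF D\<alpha> A A])
  moreover have "\<Psi> v x w = \<Psi> w x v" by (rule has_derivative_second_symmetric[OF F' \<Psi> \<Psi>])
  ultimately have "qmul (qmul (\<Phi> x v) (T' x w - qmul (qmul (T x) (\<Phi> x w)) (T x))) (\<alpha> x)
      = qmul (qmul (\<Phi> x w) (T' x v - qmul (qmul (T x) (\<Phi> x v)) (T x))) (\<alpha> x)"
    by (simp add: A_eq D\<alpha>_def qmul_ring_simps algebra_simps)
  then show ?thesis using qmul_right_cancel[OF \<alpha>_nz] by blast
qed

lemma darboux_has_derivative:
  assumes F': "(F has_derivative \<Phi>) (at x)" and T': "(T has_derivative T') (at x)"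
    and "T x \<noteq> 0"
  shows "((\<lambda>x. F x + qinv (T x)) has_derivative
      (\<lambda>u. - qmul (qmul (qinv (T x)) (T' u - qmul (qmul (T x) (\<Phi> u)) (T x))) (qinv (T x)))) (at x)"
proof -
  have "((\<lambda>x. F x + qinv (T x)) has_derivative
      (\<lambda>u. \<Phi> u + - qmul (qmul (qinv (T x)) (T' u)) (qinv (T x)))) (at x)"
    using assms by (intro has_derivative_add F' has_derivative_qinv_comp)
  then show ?thesis
    using \<open>T x \<noteq> 0\<close> by (simp add: qmul_ring_simps qmul_qinv_simps)
qed

lemma darboux_left_normal:
  fixes F \<alpha> T :: "complex \<Rightarrow> quat"
  assumes "smooth F" "smooth \<alpha>"
    and F': "\<And>x. (F has_derivative \<Phi> x) (at x)"
    and \<alpha>': "\<And>x. (\<alpha> has_derivative (\<lambda>v. - qmul (qmul (\<Phi> x v) (T x)) (\<alpha> x))) (at x)"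
    and \<alpha>_nz: "\<And>x. \<alpha> x \<noteq> 0" and \<Phi>_nz: "\<And>x. \<Phi> x 1 \<noteq> 0" and T_nz: "\<And>x. T x \<noteq> 0"
  obtains D where "\<And>x. ((\<lambda>x. F x + qinv (T x)) has_derivative D x) (at x)"
    and "\<And>x. D x \<i> = qmul (qmul (qmul (qinv (T x)) (qmul (qinv (\<Phi> x 1)) (\<Phi> x \<i>))) (T x)) (D x 1)"
proof -
  obtain T' where T': "\<And>x. (T has_derivative T' x) (at x)"
    using darboux_factor_differentiable[OF assms(1-6)] by blast
  define \<omega> where "\<omega> x u = T' x u - qmul (qmul (T x) (\<Phi> x u)) (T x)" for x u
  have "qmul (\<Phi> x 1) (\<omega> x \<i>) = qmul (\<Phi> x \<i>) (\<omega> x 1)" for x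
    using darboux_integrability[OF assms(1-3) \<alpha>' T' \<alpha>_nz] by (simp add: \<omega>_def)
  then have \<omega>_i: "\<omega> x \<i> = qmul (qmul (qinv (\<Phi> x 1)) (\<Phi> x \<i>)) (\<omega> x 1)" for x
    using \<Phi>_nz by (metis qinv_qmul_cancel_left qmul_assoc)
  show ?thesis
  proof (rule that)
    show "((\<lambda>x. F x + qinv (T x)) has_derivative
        (\<lambda>u. - qmul (qmul (qinv (T x)) (\<omega> x u)) (qinv (T x)))) (at x)" for x
      using darboux_has_derivative[OF F' T' T_nz] by (simp add: \<omega>_def)
    show "- qmul (qmul (qinv (T x)) (\<omega> x \<i>)) (qinv (T x))
        = qmul (qmul (qmul (qinv (T x)) (qmul (qinv (\<Phi> x 1)) (\<Phi> x \<i>))) (T x))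
            (- qmul (qmul (qinv (T x)) (\<omega> x 1)) (qinv (T x)))" for x
      using T_nz by (simp add: \<omega>_i qmul_ring_simps qmul_qinv_simps)
  qed
qed

definition darboux_tau :: "complex \<Rightarrow> (complex \<Rightarrow> quat) \<Rightarrow> (complex \<Rightarrow> quat) \<Rightarrow> complex \<Rightarrow> quat" where
  "darboux_tau \<beta>0 g T z = qmul (qinv (qexpj (beta \<beta>0 z / 2))) (qmul (qinv (T z)) (qinv (g z)))"

lemma darboux_tau_eq_iff:
  assumes "g z \<noteq> 0" "T z \<noteq> 0"
  shows "qinv (T z) = qmul (qmul (qexpj (beta \<beta>0 z / 2)) \<sigma>) (g z) \<longleftrightarrow> \<sigma> = darboux_tau \<beta>0 g T z"
proof -
  have "qmul (qmul (qexpj (beta \<beta>0 z / 2)) (darboux_tau \<beta>0 g T z)) (g z) = qinv (T z)"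
    using assms qexpj_nonzero by (simp add: darboux_tau_def qmul_ring_simps qmul_qinv_simps)
  then show ?thesis
    using qmul_left_cancel[OF qexpj_nonzero] qmul_right_cancel[OF \<open>g z \<noteq> 0\<close>] by metis
qed

lemma HS_torus_derivative:
  assumes "HS_torus \<Gamma> \<beta>0 f g"
  shows "(f has_derivative (\<lambda>v. qmul (qmul (qexpj (beta \<beta>0 z / 2)) (cq v)) (g z))) (at z)"
  using assms by (simp add: HS_torus_def)

lemma darboux_lagrangian_iff:
  assumes HS: "HS_torus \<Gamma> \<beta>0 f g" and "smooth \<alpha>" and \<alpha>_nz: "\<And>z. \<alpha> z \<noteq> 0"
    and \<alpha>': "\<And>z. (\<alpha> has_derivative
        (\<lambda>v. - qmul (qmul (qmul (qmul (qexpj (beta \<beta>0 z / 2)) (cq v)) (g z)) (T z)) (\<alpha> z))) (at z)"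
    and T_nz: "\<And>z. T z \<noteq> 0" and imm: "immersion (\<lambda>z. f z + qinv (T z))"
  shows "lagrangian (\<lambda>z. f z + qinv (T z)) \<longleftrightarrow>
    (\<forall>z. Im (cnj (fst (darboux_tau \<beta>0 g T z)) * cnj (snd (darboux_tau \<beta>0 g T z))) = 0)"
proof -
  define E where "E z = qexpj (beta \<beta>0 z / 2)" for z
  define \<tau> where "\<tau> = darboux_tau \<beta>0 g T"
  have g_nz: "g z \<noteq> 0" and E_nz: "E z \<noteq> 0" for z
    using HS qexpj_nonzero by (auto simp: HS_torus_def E_def)
  have \<tau>_nz: "\<tau> z \<noteq> 0" for z
    using E_nz g_nz T_nz by (simp add: \<tau>_def darboux_tau_def E_def qmul_nonzero qinv_nonzero)
  obtain D where D: "\<And>z. ((\<lambda>z. f z + qinv (T z)) has_derivative D z) (at z)"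
    and normal: "\<And>z. D z \<i> = qmul (qmul (qmul (qinv (T z)) (qmul (qinv (qmul (E z) (g z)))
        (qmul (qmul (E z) qi) (g z)))) (T z)) (D z 1)"
    using darboux_left_normal[OF _ \<open>smooth \<alpha>\<close> HS_torus_derivative[OF HS] \<alpha>' \<alpha>_nz _ T_nz] HS
      E_nz g_nz by (auto simp: HS_torus_def cq_def qi_def E_def qmul_nonzero)
  have "qmul (qmul (qinv (T z)) (qmul (qinv (qmul (E z) (g z))) (qmul (qmul (E z) qi) (g z)))) (T z)
      = qmul (qmul (E z) (qmul (qmul (\<tau> z) qi) (qinv (\<tau> z)))) (qinv (E z))" for z
    using E_nz g_nz T_nz
    by (simp add: \<tau>_def darboux_tau_def E_def[symmetric] qinv_qmul_distrib qinv_nonzero qinv_qinv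
        qmul_nonzero qmul_ring_simps qmul_qinv_simps)
  then have "lagrangian (\<lambda>z. f z + qinv (T z)) \<longleftrightarrow> (\<forall>z. inner qj (qmul (qmul (\<tau> z) qi) (qinv (\<tau> z))) = 0)"
    using lagrangian_iff_left_normal[OF imm D normal] by (simp add: E_def inner_qj_qexpj_conj)
  then show ?thesis using inner_qj_qi_conj[OF \<tau>_nz] by (simp add: \<tau>_def)
qed

lemma HS_torus_derivative_periodic:
  assumes "HS_torus \<Gamma> \<beta>0 f g" "\<gamma> \<in> \<Gamma>"
  shows "qmul (qmul (qexpj (beta \<beta>0 (z + \<gamma>) / 2)) (cq v)) (g (z + \<gamma>))
       = qmul (qmul (qexpj (beta \<beta>0 z / 2)) (cq v)) (g z)"
proof -
  have "periodic \<Gamma> f" using assms(1) by (simp add: HS_torus_def)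
  from has_derivative_periodic[OF this assms(2) HS_torus_derivative[OF assms(1)]]
  show ?thesis by (rule fun_cong)
qed

lemma darboux_factor_periodic:
  assumes HS: "HS_torus \<Gamma> \<beta>0 f g" and \<alpha>_nz: "\<And>z. \<alpha> z \<noteq> 0"
    and \<alpha>': "\<And>z. (\<alpha> has_derivative
        (\<lambda>v. - qmul (qmul (qmul (qmul (qexpj (beta \<beta>0 z / 2)) (cq v)) (g z)) (T z)) (\<alpha> z))) (at z)"
    and \<alpha>_shift: "\<And>z. \<alpha> (z + \<gamma>) = qmul (\<alpha> z) c" and "c \<noteq> 0" and "\<gamma> \<in> \<Gamma>"
  shows "T (z + \<gamma>) = T z"
proof -
  define \<Phi> where "\<Phi> z v = qmul (qmul (qexpj (beta \<beta>0 z / 2)) (cq v)) (g z)" for z v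
  have \<Phi>_shift: "\<Phi> (z + \<gamma>) = \<Phi> z"
    by (rule ext) (simp add: \<Phi>_def HS_torus_derivative_periodic[OF HS \<open>\<gamma> \<in> \<Gamma>\<close>])
  have \<Phi>_nz: "\<Phi> z 1 \<noteq> 0"
    using HS by (simp add: HS_torus_def \<Phi>_def cq_def qexpj_nonzero qmul_nonzero)
  have "((\<lambda>x. \<alpha> (x + \<gamma>)) has_derivative (\<lambda>v. - qmul (qmul (\<Phi> z v) (T (z + \<gamma>))) (\<alpha> (z + \<gamma>)))) (at z)"
    using has_derivative_shift[OF \<alpha>'[of "z + \<gamma>"]] by (simp add: \<Phi>_def[symmetric] \<Phi>_shift)
  moreover have "((\<lambda>x. \<alpha> (x + \<gamma>)) has_derivative (\<lambda>v. qmul (- qmul (qmul (\<Phi> z v) (T z)) (\<alpha> z)) c))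
      (at z)"
    using has_derivative_qmul[OF \<alpha>' has_derivative_const[of c]] \<alpha>_shift by (simp add: \<Phi>_def)
  ultimately have "(\<lambda>v. - qmul (qmul (\<Phi> z v) (T (z + \<gamma>))) (\<alpha> (z + \<gamma>)))
      = (\<lambda>v. qmul (- qmul (qmul (\<Phi> z v) (T z)) (\<alpha> z)) c)"
    by (rule has_derivative_unique)
  from fun_cong[OF this, of 1]
  have "qmul (qmul (\<Phi> z 1) (T (z + \<gamma>))) (\<alpha> (z + \<gamma>)) = qmul (qmul (qmul (\<Phi> z 1) (T z)) (\<alpha> z)) c"
    by (simp add: qmul_minus_left)
  then have "qmul (\<Phi> z 1) (qmul (T (z + \<gamma>)) (qmul (\<alpha> z) c))
      = qmul (\<Phi> z 1) (qmul (T z) (qmul (\<alpha> z) c))"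
    by (simp add: \<alpha>_shift qmul_assoc)
  then show ?thesis
    using qmul_left_cancel[OF \<Phi>_nz] qmul_right_cancel[OF qmul_nonzero[OF \<alpha>_nz \<open>c \<noteq> 0\<close>]] by blast
qed

lemma darboux_tau_periodic:
  assumes HS: "HS_torus \<Gamma> \<beta>0 f g" and \<alpha>_nz: "\<And>z. \<alpha> z \<noteq> 0" and "has_multiplier \<Gamma> \<alpha>"
    and \<alpha>': "\<And>z. (\<alpha> has_derivative
        (\<lambda>v. - qmul (qmul (qmul (qmul (qexpj (beta \<beta>0 z / 2)) (cq v)) (g z)) (T z)) (\<alpha> z))) (at z)"
  shows "periodic \<Gamma> (darboux_tau \<beta>0 g T)"
  unfolding periodic_def
proof (intro ballI allI)
  fix \<gamma> z assume "\<gamma> \<in> \<Gamma>"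
  define E where "E z = qexpj (beta \<beta>0 z / 2)" for z
  obtain h where "h \<gamma> \<noteq> 0" and "\<And>z. \<alpha> (z + \<gamma>) = qmul (\<alpha> z) (cq (h \<gamma>))"
    using \<open>has_multiplier \<Gamma> \<alpha>\<close> \<open>\<gamma> \<in> \<Gamma>\<close> unfolding has_multiplier_def by blast
  then have T_shift: "T (z + \<gamma>) = T z"
    using darboux_factor_periodic[OF HS \<alpha>_nz \<alpha>'] \<open>\<gamma> \<in> \<Gamma>\<close> by (simp add: cq_def zero_prod_def)
  obtain k where "k \<in> \<int>" "\<beta>0 \<bullet> \<gamma> = k"
    using HS \<open>\<gamma> \<in> \<Gamma>\<close> by (auto simp: HS_torus_def dual_lattice_def)
  then have beta_shift: "beta \<beta>0 (z + \<gamma>) / 2 = beta \<beta>0 z / 2 + pi * k"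
    by (simp add: beta_def inner_add_right algebra_simps)
  define c where "c = cos (pi * k)"
  have E_shift: "E (z + \<gamma>) = c *\<^sub>R E z" and "c\<^sup>2 = 1"
    using qexpj_add_int_pi[OF \<open>k \<in> \<int>\<close>] by (simp_all add: E_def c_def beta_shift)
  then have "c \<noteq> 0" by auto
  have "qmul (E (z + \<gamma>)) (g (z + \<gamma>)) = qmul (E z) (g z)"
    using HS_torus_derivative_periodic[OF HS \<open>\<gamma> \<in> \<Gamma>\<close>, of z 1] by (simp add: E_def cq_def)
  then have "qmul (E z) (c *\<^sub>R g (z + \<gamma>)) = qmul (E z) (g z)"
    by (simp add: E_shift qmul_scaleR_left qmul_scaleR_right)
  then have "c *\<^sub>R g (z + \<gamma>) = g z"
    unfolding E_def by (rule qmul_left_cancel[OF qexpj_nonzero])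
  then have "g (z + \<gamma>) = (1 / c) *\<^sub>R g z"
    using \<open>c \<noteq> 0\<close> by (simp flip: \<open>c *\<^sub>R g (z + \<gamma>) = g z\<close>)
  then show "darboux_tau \<beta>0 g T (z + \<gamma>) = darboux_tau \<beta>0 g T z"
    using \<open>c \<noteq> 0\<close> \<open>c\<^sup>2 = 1\<close>
    by (simp add: darboux_tau_def E_def[symmetric] E_shift T_shift qinv_scaleR qmul_scaleR_left
        qmul_scaleR_right power2_eq_square)
qed

lemma ex_periodic_components_iff:
  assumes "periodic \<Gamma> \<tau>"
  shows "(\<exists>\<tau>0 \<tau>1. periodic \<Gamma> \<tau>0 \<and> periodic \<Gamma> \<tau>1 \<and> (\<forall>z. (\<tau>0 z, cnj (\<tau>1 z)) = \<tau> z)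
            \<and> (\<forall>z. P (\<tau>0 z) (\<tau>1 z)))
     \<longleftrightarrow> (\<forall>z. P (fst (\<tau> z)) (cnj (snd (\<tau> z))))"
proof
  assume "\<exists>\<tau>0 \<tau>1. periodic \<Gamma> \<tau>0 \<and> periodic \<Gamma> \<tau>1 \<and> (\<forall>z. (\<tau>0 z, cnj (\<tau>1 z)) = \<tau> z)
            \<and> (\<forall>z. P (\<tau>0 z) (\<tau>1 z))"
  then show "\<forall>z. P (fst (\<tau> z)) (cnj (snd (\<tau> z)))"
    by (metis complex_cnj_cnj fst_conv snd_conv)
next
  assume "\<forall>z. P (fst (\<tau> z)) (cnj (snd (\<tau> z)))"
  with assms show "\<exists>\<tau>0 \<tau>1. periodic \<Gamma> \<tau>0 \<and> periodic \<Gamma> \<tau>1 \<and> (\<forall>z. (\<tau>0 z, cnj (\<tau>1 z)) = \<tau> z)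
            \<and> (\<forall>z. P (\<tau>0 z) (\<tau>1 z))"
    by (intro exI[of _ "\<lambda>z. fst (\<tau> z)"] exI[of _ "\<lambda>z. cnj (snd (\<tau> z))"]) (simp add: periodic_def)
qed

theorem corollary3p10:
  fixes \<Gamma> :: "complex set" and \<beta>0 :: complex
    and f g \<alpha> T fhat :: "complex \<Rightarrow> quat"
  assumes HS: "HS_torus \<Gamma> \<beta>0 f g"
    and alpha_smooth: "smooth \<alpha>"
    and alpha_nz: "\<forall>z. \<alpha> z \<noteq> 0"
    and alpha_hol: "holomorphic_wrt (\<lambda>z. qmul (qexpj (beta \<beta>0 z)) qi) \<alpha>"
    and alpha_mult: "has_multiplier \<Gamma> \<alpha>"
    and T_def: "\<forall>z. (\<alpha> has_derivative
                  (\<lambda>v. - qmul (qmul (qmul (qmul (qexpj (beta \<beta>0 z / 2)) (cq v)) (g z)) (T z)) (\<alpha> z)))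
                (at z)"
    and T_nz: "\<forall>z. T z \<noteq> 0"
    and fhat_def: "fhat = (\<lambda>z. f z + qinv (T z))"
    and fhat_imm: "immersion fhat"
  shows "lagrangian fhat \<longleftrightarrow>
    (\<exists>\<tau>0 \<tau>1 :: complex \<Rightarrow> complex. periodic \<Gamma> \<tau>0 \<and> periodic \<Gamma> \<tau>1 \<and>
       (\<forall>z. fhat z = f z + qmul (qmul (qexpj (beta \<beta>0 z / 2)) (cq (\<tau>0 z) + qmul qj (cq (\<tau>1 z)))) (g z)) \<and>
       (\<forall>z. Im (cnj (\<tau>0 z) * \<tau>1 z) = 0))"
proof -
  define \<tau> where "\<tau> = darboux_tau \<beta>0 g T"
  have fhat_eq_iff: "fhat z = f z + qmul (qmul (qexpj (beta \<beta>0 z / 2)) \<sigma>) (g z) \<longleftrightarrow> \<sigma> = \<tau> z"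
    for z \<sigma>
    using darboux_tau_eq_iff[of g z T] HS T_nz by (auto simp: fhat_def \<tau>_def HS_torus_def)
  have lagrangian_iff: "lagrangian fhat \<longleftrightarrow> (\<forall>z. Im (cnj (fst (\<tau> z)) * cnj (snd (\<tau> z))) = 0)"
    using darboux_lagrangian_iff[OF HS alpha_smooth _ _ _ fhat_imm[unfolded fhat_def]]
      alpha_nz T_def T_nz by (simp add: fhat_def \<tau>_def)
  have "periodic \<Gamma> \<tau>"
    using darboux_tau_periodic[OF HS _ alpha_mult] alpha_nz T_def by (simp add: \<tau>_def)
  from ex_periodic_components_iff[OF this, where P = "\<lambda>a b. Im (cnj a * b) = 0"]
  show ?thesis
    unfolding cq_add_qj_cq fhat_eq_iff lagrangian_iff by simp
qed

end
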